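(* Consider the weighted median search process described in the context, with initial weights satisfying $\omega_0(V)=1$. For every $\tau\ge 0$ and any sequence of answers, $$\omega_\tau(V\setminus\{x_\tau\})\le\frac{1}{2^\tau},$$ where $x_\tau$ is a heaviest vertex with respect to $\omega_\tau$ (i.e., $\omega_\tau(x_\tau)\ge\omega_\tau(u)$ for all $u\in V$, ties broken arbitrarily).
   Context: $G=(V,E)$ is a connected undirected unweighted graph, $0<p<\frac12$, $d(u,v)$ is the graph distance. Positive weights $\omega_t(v)$ are maintained, with $\omega(U)=\sum_{u\in U}\omega(u)$; a vertex $v$ is heavy (w.r.t. $\omega$) if $\omega(v)/\omega(V)\ge\frac12$. A median w.r.t. $\omega$ is a vertex $q$ minimizing $\sum_{u\in V}d(u,q)\omega(u)$. In step $t$ the process queries a median $q$ w.r.t. $\omega_{t-1}$, where a heavy vertex is chosen whenever one exists (a heavy vertex is always a median). The answer is either "yes" or a neighbor $u$ of $q$ (a "no-answer"). A vertex $v$ is compatible with the answer if: for a yes-answer, $v=q$; for a no-answer $u$ with $q$ not heavy, $u$ lies on a shortest $q$–$v$ path; for a no-answer with $q$ heavy, $v\neq q$. Bayesian update: $\omega_t(v)=(1-p)\omega_{t-1}(v)$ if $v$ is compatible and $\omega_t(v)=p\,\omega_{t-1}(v)$ otherwise. *)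

theory Defs
  imports Main Complex_Main
begin

definition is_walk :: "('a \<Rightarrow> 'a \<Rightarrow> bool) \<Rightarrow> 'a list \<Rightarrow> bool" where
  "is_walk E xs \<longleftrightarrow> xs \<noteq> [] \<and> (\<forall>i. Suc i < length xs \<longrightarrow> E (xs ! i) (xs ! Suc i))"

definition walk_between :: "('a \<Rightarrow> 'a \<Rightarrow> bool) \<Rightarrow> 'a \<Rightarrow> 'a \<Rightarrow> 'a list \<Rightarrow> bool" where
  "walk_between E u v xs \<longleftrightarrow> is_walk E xs \<and> hd xs = u \<and> last xs = v"

definition graph_connected :: "'a set \<Rightarrow> ('a \<Rightarrow> 'a \<Rightarrow> bool) \<Rightarrow> bool" where
  "graph_connected V E \<longleftrightarrow> (\<forall>u\<in>V. \<forall>v\<in>V. \<exists>xs. walk_between E u v xs)"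

definition simple_graph :: "'a set \<Rightarrow> ('a \<Rightarrow> 'a \<Rightarrow> bool) \<Rightarrow> bool" where
  "simple_graph V E \<longleftrightarrow> finite V \<and> V \<noteq> {} \<and>
     (\<forall>u v. E u v \<longrightarrow> u \<in> V \<and> v \<in> V) \<and>
     (\<forall>u v. E u v \<longrightarrow> E v u) \<and> (\<forall>u. \<not> E u u)"

definition gdist :: "('a \<Rightarrow> 'a \<Rightarrow> bool) \<Rightarrow> 'a \<Rightarrow> 'a \<Rightarrow> nat" where
  "gdist E u v = (LEAST n. \<exists>xs. walk_between E u v xs \<and> length xs = Suc n)"

definition on_shortest_path :: "('a \<Rightarrow> 'a \<Rightarrow> bool) \<Rightarrow> 'a \<Rightarrow> 'a \<Rightarrow> 'a \<Rightarrow> bool" where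
  "on_shortest_path E q v u \<longleftrightarrow>
     (\<exists>xs. walk_between E q v xs \<and> length xs = Suc (gdist E q v) \<and> u \<in> set xs)"

definition heavy :: "'a set \<Rightarrow> ('a \<Rightarrow> real) \<Rightarrow> 'a \<Rightarrow> bool" where
  "heavy V w v \<longleftrightarrow> v \<in> V \<and> w v / (\<Sum>u\<in>V. w u) \<ge> 1/2"

definition median_cost :: "'a set \<Rightarrow> ('a \<Rightarrow> 'a \<Rightarrow> bool) \<Rightarrow> ('a \<Rightarrow> real) \<Rightarrow> 'a \<Rightarrow> real" where
  "median_cost V E w q = (\<Sum>u\<in>V. real (gdist E u q) * w u)"

definition is_median :: "'a set \<Rightarrow> ('a \<Rightarrow> 'a \<Rightarrow> bool) \<Rightarrow> ('a \<Rightarrow> real) \<Rightarrow> 'a \<Rightarrow> bool" where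
  "is_median V E w q \<longleftrightarrow> q \<in> V \<and> (\<forall>y\<in>V. median_cost V E w q \<le> median_cost V E w y)"

text \<open>Answers: None = "yes", Some u = no-answer pointing to neighbour u.
  Compatibility of vertex v with answer a to query q, given current weights w.\<close>
definition compatible ::
  "'a set \<Rightarrow> ('a \<Rightarrow> 'a \<Rightarrow> bool) \<Rightarrow> ('a \<Rightarrow> real) \<Rightarrow> 'a \<Rightarrow> 'a option \<Rightarrow> 'a \<Rightarrow> bool" where
  "compatible V E w q a v =
     (case a of
        None \<Rightarrow> v = q
      | Some u \<Rightarrow> (if heavy V w q then v \<noteq> q else on_shortest_path E q v u))"

definition heaviest :: "'a set \<Rightarrow> ('a \<Rightarrow> real) \<Rightarrow> 'a \<Rightarrow> bool" where
  "heaviest V w x \<longleftrightarrow> x \<in> V \<and> (\<forall>u\<in>V. w u \<le> w x)"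

definition median_process ::
  "'a set \<Rightarrow> ('a \<Rightarrow> 'a \<Rightarrow> bool) \<Rightarrow> real \<Rightarrow> (nat \<Rightarrow> 'a \<Rightarrow> real) \<Rightarrow> (nat \<Rightarrow> 'a)
     \<Rightarrow> (nat \<Rightarrow> 'a option) \<Rightarrow> bool" where
  "median_process V E p w q a \<longleftrightarrow>
     (\<forall>v\<in>V. w 0 v > 0) \<and>
     (\<forall>t. is_median V E (w t) (q t) \<and>
          ((\<exists>v\<in>V. heavy V (w t) v) \<longrightarrow> heavy V (w t) (q t)) \<and>
          (\<forall>u. a t = Some u \<longrightarrow> E (q t) u) \<and>
          (\<forall>v\<in>V. w (Suc t) v =
              (if compatible V E (w t) (q t) (a t) v then (1 - p) else p) * w t v))"

end

(*
  Let W be the total weight. Without a heavy vertex the queried median q is not heavy, and the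
  vertices compatible with any answer weigh at most W/2: for a no-answer u this is the median
  property, since moving the query from q to u brings every such vertex one step closer and
  every other vertex at most one step farther. Hence W at least halves. A heavy vertex z is
  queried itself, and every answer multiplies w(z) w(V - z) by p (1 - p) <= 1/4.
  The potential equal to 4 w(z) w(V - z) if some z is heavy and to W^2 otherwise therefore
  shrinks by a factor 4 per step (if z stops being heavy, the new W^2 is at most the old
  w(z) w(V - z)), it starts at most 1, and it bounds w(V - x)\<^sup>2 for a heaviest x.
*)

theory Submission
  imports Defs
begin

section \<open>Walks, graph distance and medians\<close>

lemma is_walk_snoc:
  assumes "is_walk E xs" "E (last xs) u"
  shows "is_walk E (xs @ [u])"
  unfolding is_walk_def
proof (intro conjI allI impI)
  show "xs @ [u] \<noteq> []" by simp
  fix i assume i: "Suc i < length (xs @ [u])"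
  have "xs \<noteq> []" using assms(1) by (simp add: is_walk_def)
  show "E ((xs @ [u]) ! i) ((xs @ [u]) ! Suc i)"
  proof (cases "Suc i < length xs")
    case True
    then show ?thesis using assms(1) by (simp add: is_walk_def nth_append)
  next
    case False
    with i have "i = length xs - 1" by simp
    with assms(2) \<open>xs \<noteq> []\<close> show ?thesis by (simp add: nth_append last_conv_nth)
  qed
qed

lemma is_walk_rev:
  assumes "is_walk E xs" "symp E"
  shows "is_walk E (rev xs)"
  unfolding is_walk_def
proof (intro conjI allI impI)
  show "rev xs \<noteq> []" using assms(1) by (simp add: is_walk_def)
  fix i assume i: "Suc i < length (rev xs)"
  define j where "j = length xs - Suc (Suc i)"
  have "E (xs ! j) (xs ! Suc j)"
    using assms(1) i unfolding is_walk_def j_def by simp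
  then have "E (xs ! Suc j) (xs ! j)" by (rule sympD[OF assms(2)])
  moreover have "Suc j = length xs - Suc i" using i unfolding j_def by simp
  ultimately show "E (rev xs ! i) (rev xs ! Suc i)"
    using i by (simp add: rev_nth j_def)
qed

lemma is_walk_take:
  assumes "is_walk E xs" "0 < k"
  shows "is_walk E (take k xs)"
  using assms unfolding is_walk_def by auto

lemma walk_between_rev:
  assumes "walk_between E u v xs" "symp E"
  shows "walk_between E v u (rev xs)"
  using assms is_walk_rev[of E xs]
  by (auto simp: walk_between_def is_walk_def hd_rev last_rev)

lemma gdist_sym:
  assumes "symp E"
  shows "gdist E u v = gdist E v u"
proof -
  have "(\<exists>xs. walk_between E u v xs \<and> length xs = n) \<longleftrightarrow>
        (\<exists>xs. walk_between E v u xs \<and> length xs = n)" for n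
    using walk_between_rev[OF _ assms] by (metis length_rev rev_rev_ident)
  then show ?thesis unfolding gdist_def by simp
qed

lemma gdist_le_length:
  assumes "walk_between E u v xs"
  shows "Suc (gdist E u v) \<le> length xs"
proof -
  obtain n where n: "length xs = Suc n"
    using assms by (cases xs) (auto simp: walk_between_def is_walk_def)
  with assms have "gdist E u v \<le> n"
    unfolding gdist_def by (intro Least_le) auto
  with n show ?thesis by simp
qed

lemma shortest_walk_exists:
  assumes "walk_between E u v xs"
  shows "\<exists>ys. walk_between E u v ys \<and> length ys = Suc (gdist E u v)"
proof -
  obtain n where "length xs = Suc n"
    using assms by (cases xs) (auto simp: walk_between_def is_walk_def)
  with assms have "\<exists>n ys. walk_between E u v ys \<and> length ys = Suc n" by blast
  then show ?thesis unfolding gdist_def by (rule LeastI_ex)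
qed

lemma gdist_neighbor_le:
  assumes "walk_between E v q xs" "E q u"
  shows "gdist E v u \<le> Suc (gdist E v q)"
proof -
  obtain ys where ys: "walk_between E v q ys" "length ys = Suc (gdist E v q)"
    using shortest_walk_exists[OF assms(1)] by blast
  moreover have "is_walk E (ys @ [u])"
    using ys(1) assms(2) by (intro is_walk_snoc) (auto simp: walk_between_def)
  ultimately have "walk_between E v u (ys @ [u])"
    by (auto simp: walk_between_def is_walk_def)
  from gdist_le_length[OF this] ys(2) show ?thesis by simp
qed

lemma gdist_on_shortest_path_less:
  assumes "symp E" "irreflp E" "on_shortest_path E q v u" "E q u"
  shows "gdist E v u < gdist E v q"
proof -
  obtain xs where xs: "walk_between E q v xs" "length xs = Suc (gdist E q v)" "u \<in> set xs"
    using assms(3) unfolding on_shortest_path_def by blast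
  define ys where "ys = rev xs"
  have ys: "walk_between E v q ys" "length ys = Suc (gdist E v q)"
    using walk_between_rev[OF xs(1) assms(1)] xs(2) gdist_sym[OF assms(1)] by (simp_all add: ys_def)
  obtain j where j: "j < length ys" "ys ! j = u"
    using xs(3) by (metis in_set_conv_nth set_rev ys_def)
  have "u \<noteq> q" using assms(2,4) by (metis irreflpD)
  with ys(1) j have "Suc j < length ys"
    by (metis Suc_lessI diff_Suc_1 last_conv_nth list.size(3) not_less0 walk_between_def)
  have "last (take (Suc j) ys) = u" using j by (simp add: take_Suc_conv_app_nth)
  with ys(1) is_walk_take[of E ys "Suc j"] have "walk_between E v u (take (Suc j) ys)"
    by (auto simp: walk_between_def)
  from gdist_le_length[OF this] \<open>Suc j < length ys\<close> ys(2) show ?thesis by simp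
qed

lemma median_shortest_path_weight_le_half:
  assumes "simple_graph V E" "graph_connected V E" "is_median V E w q" "E q u"
    and nonneg: "\<forall>v\<in>V. 0 \<le> w v"
  shows "2 * (\<Sum>v\<in>{v\<in>V. on_shortest_path E q v u}. w v) \<le> (\<Sum>v\<in>V. w v)"
proof -
  define C where "C v \<longleftrightarrow> on_shortest_path E q v u" for v
  have fin: "finite V" and sym: "symp E" and irr: "irreflp E" and qV: "q \<in> V" and uV: "u \<in> V"
    using assms(1,4) unfolding simple_graph_def symp_def irreflp_def by blast+
  have shift: "real (gdist E v u) * w v
      \<le> real (gdist E v q) * w v + w v - 2 * (if C v then w v else 0)" if v: "v \<in> V" for v
  proof (cases "C v")
    case True
    then have "gdist E v u < gdist E v q"
      unfolding C_def by (rule gdist_on_shortest_path_less[OF sym irr _ assms(4)])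
    then have "real (gdist E v u) \<le> real (gdist E v q) - 1" by linarith
    then have "real (gdist E v u) * w v \<le> (real (gdist E v q) - 1) * w v"
      using nonneg v by (intro mult_right_mono) auto
    with True show ?thesis by (simp add: algebra_simps)
  next
    case False
    obtain xs where "walk_between E v q xs"
      using assms(2) v qV unfolding graph_connected_def by blast
    then have "gdist E v u \<le> Suc (gdist E v q)" using assms(4) by (rule gdist_neighbor_le)
    then have "real (gdist E v u) \<le> real (gdist E v q) + 1" by linarith
    then have "real (gdist E v u) * w v \<le> (real (gdist E v q) + 1) * w v"
      using nonneg v by (intro mult_right_mono) auto
    with False show ?thesis by (simp add: algebra_simps)
  qed
  have "median_cost V E w u
      \<le> (\<Sum>v\<in>V. real (gdist E v q) * w v + w v - 2 * (if C v then w v else 0))"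
    unfolding median_cost_def by (intro sum_mono shift)
  also have "\<dots> = median_cost V E w q + (\<Sum>v\<in>V. w v) - 2 * (\<Sum>v\<in>{v\<in>V. C v}. w v)"
    by (simp add: median_cost_def sum.distrib sum_subtractf sum_distrib_left sum.inter_filter[OF fin])
  finally show ?thesis
    using assms(3) uV unfolding C_def is_median_def by fastforce
qed

section \<open>Heavy vertices and the potential\<close>

lemma heavy_iff_remainder_le:
  assumes fin: "finite V" and pos: "\<forall>v\<in>V. 0 < w v"
  shows "heavy V w z \<longleftrightarrow> z \<in> V \<and> (\<Sum>v\<in>V - {z}. w v) \<le> w z"
proof (cases "z \<in> V")
  case True
  have split: "(\<Sum>v\<in>V. w v) = w z + (\<Sum>v\<in>V - {z}. w v)"
    using fin True by (simp add: sum.remove)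
  have "0 \<le> (\<Sum>v\<in>V - {z}. w v)" using pos by (intro sum_nonneg) (simp add: less_imp_le)
  moreover have "0 < w z" using pos True by simp
  ultimately have "0 < (\<Sum>v\<in>V. w v)" using split by linarith
  with True split show ?thesis by (simp add: heavy_def field_simps)
qed (simp add: heavy_def)

lemma heavy_vertices_same_product:
  assumes fin: "finite V" and pos: "\<forall>v\<in>V. 0 < w v" and "heavy V w y" "heavy V w z"
  shows "w y * (\<Sum>v\<in>V - {y}. w v) = w z * (\<Sum>v\<in>V - {z}. w v)"
proof (cases "y = z")
  case False
  have y: "y \<in> V" "(\<Sum>v\<in>V - {y}. w v) \<le> w y" and z: "z \<in> V" "(\<Sum>v\<in>V - {z}. w v) \<le> w z"
    using assms heavy_iff_remainder_le[OF fin pos] by blast+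
  have "w z \<le> (\<Sum>v\<in>V - {y}. w v)" "w y \<le> (\<Sum>v\<in>V - {z}. w v)"
    using False y(1) z(1) fin pos by (auto intro!: member_le_sum simp: less_imp_le)
  moreover have "w y + (\<Sum>v\<in>V - {y}. w v) = w z + (\<Sum>v\<in>V - {z}. w v)"
    using fin y(1) z(1) by (simp add: sum.remove[symmetric])
  ultimately have "w y = (\<Sum>v\<in>V - {z}. w v)" "w z = (\<Sum>v\<in>V - {y}. w v)"
    using y(2) z(2) by linarith+
  then show ?thesis by (simp add: mult.commute)
qed simp

(* Which heavy vertex SOME picks is irrelevant: by heavy_vertices_same_product all give the
   same product. *)
definition search_potential :: "'a set \<Rightarrow> ('a \<Rightarrow> real) \<Rightarrow> real" where
  "search_potential V w =
     (if \<exists>z. heavy V w z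
      then (let z = SOME z. heavy V w z in 4 * w z * (\<Sum>v\<in>V - {z}. w v))
      else (\<Sum>v\<in>V. w v)\<^sup>2)"

lemma search_potential_heavy:
  assumes "finite V" "\<forall>v\<in>V. 0 < w v" "heavy V w z"
  shows "search_potential V w = 4 * w z * (\<Sum>v\<in>V - {z}. w v)"
proof -
  have "heavy V w (SOME z. heavy V w z)" using assms(3) by (rule someI)
  moreover have "\<exists>z. heavy V w z" using assms(3) by blast
  ultimately show ?thesis using heavy_vertices_same_product[OF assms(1,2) _ assms(3)]
    by (simp add: search_potential_def Let_def mult.assoc)
qed

lemma search_potential_le_square_total:
  assumes "finite V" "\<forall>v\<in>V. 0 < w v"
  shows "search_potential V w \<le> (\<Sum>v\<in>V. w v)\<^sup>2"
proof (cases "\<exists>z. heavy V w z")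
  case True
  then obtain z where z: "heavy V w z" by blast
  then have "(\<Sum>v\<in>V. w v) = w z + (\<Sum>v\<in>V - {z}. w v)"
    using assms(1) by (simp add: heavy_def sum.remove)
  moreover have "4 * w z * r \<le> (w z + r)\<^sup>2" for r
    using sum_squares_ge_zero[of "w z - r" 0] by (simp add: power2_eq_square algebra_simps)
  ultimately show ?thesis using search_potential_heavy[OF assms z] by simp
qed (simp add: search_potential_def)

lemma remainder_square_le_search_potential:
  assumes fin: "finite V" and pos: "\<forall>v\<in>V. 0 < w v" and "heaviest V w x"
  shows "(\<Sum>v\<in>V - {x}. w v)\<^sup>2 \<le> search_potential V w"
proof -
  have x: "x \<in> V" "\<forall>u\<in>V. w u \<le> w x" using assms(3) by (auto simp: heaviest_def)
  have rx: "0 \<le> (\<Sum>v\<in>V - {x}. w v)" using pos by (intro sum_nonneg) (simp add: less_imp_le)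
  have split_x: "(\<Sum>v\<in>V. w v) = w x + (\<Sum>v\<in>V - {x}. w v)"
    using fin x(1) by (simp add: sum.remove)
  show ?thesis
  proof (cases "\<exists>z. heavy V w z")
    case True
    then obtain z where z: "heavy V w z" by blast
    then have zV: "z \<in> V" and rz: "(\<Sum>v\<in>V - {z}. w v) \<le> w z"
      using heavy_iff_remainder_le[OF fin pos] by blast+
    have "(\<Sum>v\<in>V. w v) = w z + (\<Sum>v\<in>V - {z}. w v)"
      using fin zV by (simp add: sum.remove)
    with split_x x(2) zV have "(\<Sum>v\<in>V - {x}. w v) \<le> (\<Sum>v\<in>V - {z}. w v)" by fastforce
    then have "(\<Sum>v\<in>V - {x}. w v)\<^sup>2 \<le> (\<Sum>v\<in>V - {z}. w v) * (\<Sum>v\<in>V - {z}. w v)"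
      using rx by (simp add: power2_eq_square mult_mono)
    also have "\<dots> \<le> 4 * w z * (\<Sum>v\<in>V - {z}. w v)"
      using rz rx \<open>(\<Sum>v\<in>V - {x}. w v) \<le> _\<close> by (intro mult_right_mono) auto
    finally show ?thesis using search_potential_heavy[OF fin pos z] by simp
  next
    case False
    have "0 \<le> w x" using pos x(1) by (simp add: less_imp_le)
    with split_x rx have "(\<Sum>v\<in>V - {x}. w v)\<^sup>2 \<le> (\<Sum>v\<in>V. w v)\<^sup>2" by (intro power_mono) auto
    with False show ?thesis by (simp add: search_potential_def)
  qed
qed

lemma mixed_total_square_le_product:
  fixes p h r :: real
  assumes p: "0 \<le> p" "p \<le> 1/2" and r: "0 \<le> r" "r \<le> h" and "p * h \<le> (1 - p) * r"
  shows "(p * h + (1 - p) * r)\<^sup>2 \<le> h * r"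
proof -
  have "p * (p * h) \<le> p * ((1 - p) * r)" using assms(5) p by (simp add: mult_left_mono)
  also have "\<dots> \<le> (1 - p) * ((1 - p) * r)" using p r by (intro mult_right_mono) auto
  finally have "p\<^sup>2 * h \<le> (1 - p)\<^sup>2 * r" by (simp add: power2_eq_square algebra_simps)
  with r have "0 \<le> (h - r) * ((1 - p)\<^sup>2 * r - p\<^sup>2 * h)" by simp
  also have "\<dots> = h * r - (p * h + (1 - p) * r)\<^sup>2" by (simp add: power2_eq_square algebra_simps)
  finally show ?thesis by simp
qed

lemma search_potential_heavy_update:
  fixes w w' :: "'a \<Rightarrow> real"
  assumes fin: "finite V" and pos: "\<forall>v\<in>V. 0 < w v" and heavy: "heavy V w z"
    and p: "0 < p" "p < 1/2"
    and update: "\<forall>v\<in>V. w' v = (if v = z \<longleftrightarrow> yes then 1 - p else p) * w v"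
  shows "search_potential V w' \<le> search_potential V w / 4"
proof -
  define h where "h = w z"
  define r where "r = (\<Sum>v\<in>V - {z}. w v)"
  have zV: "z \<in> V" and "r \<le> h"
    using heavy heavy_iff_remainder_le[OF fin pos] unfolding h_def r_def by blast+
  have "0 < h" using pos zV unfolding h_def by simp
  have "0 \<le> r" unfolding r_def using pos by (intro sum_nonneg) (simp add: less_imp_le)
  have pos': "\<forall>v\<in>V. 0 < w' v" using update pos p by simp
  have h': "w' z = (if yes then 1 - p else p) * h" using update zV unfolding h_def by simp
  have r': "(\<Sum>v\<in>V - {z}. w' v) = (if yes then p else 1 - p) * r"
    unfolding r_def sum_distrib_left using update by (intro sum.cong) auto
  have old: "search_potential V w = 4 * h * r"
    unfolding h_def r_def by (rule search_potential_heavy[OF fin pos heavy])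
  show ?thesis
  proof (cases "heavy V w' z")
    case True
    have "p * (1 - p) \<le> 1/4" using sum_squares_ge_zero[of "1 - 2 * p" 0]
      by (simp add: power2_eq_square algebra_simps)
    then have "4 * (p * (1 - p)) * (h * r) \<le> 1 * (h * r)"
      using \<open>0 < h\<close> \<open>0 \<le> r\<close> by (intro mult_right_mono) auto
    with search_potential_heavy[OF fin pos' True] h' r' old show ?thesis
      by (simp add: algebra_simps)
  next
    case False
    then have "w' z < (\<Sum>v\<in>V - {z}. w' v)"
      using heavy_iff_remainder_le[OF fin pos'] zV by auto
    moreover have "p * r < (1 - p) * h"
    proof -
      have "p * r \<le> p * h" using \<open>r \<le> h\<close> p by simp
      also have "\<dots> < (1 - p) * h" using \<open>0 < h\<close> p by simp
      finally show ?thesis .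
    qed
    \<comment> \<open>A yes-answer keeps z heavy.\<close>
    ultimately have "\<not> yes" using h' r' by auto
    with \<open>w' z < _\<close> h' r' have "p * h < (1 - p) * r" by simp
    with \<open>r \<le> h\<close> \<open>0 \<le> r\<close> p have "(p * h + (1 - p) * r)\<^sup>2 \<le> h * r"
      by (intro mixed_total_square_le_product) auto
    moreover have "(\<Sum>v\<in>V. w' v) = p * h + (1 - p) * r"
      using fin zV h' r' \<open>\<not> yes\<close> by (simp add: sum.remove)
    ultimately show ?thesis
      using search_potential_le_square_total[OF fin pos'] old by simp
  qed
qed

lemma search_potential_halving_update:
  fixes w w' :: "'a \<Rightarrow> real"
  assumes fin: "finite V" and pos: "\<forall>v\<in>V. 0 < w v" and no_heavy: "\<not> (\<exists>z. heavy V w z)"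
    and p: "0 < p" "p < 1/2"
    and half: "2 * (\<Sum>v\<in>{v\<in>V. P v}. w v) \<le> (\<Sum>v\<in>V. w v)"
    and update: "\<forall>v\<in>V. w' v = (if P v then 1 - p else p) * w v"
  shows "search_potential V w' \<le> search_potential V w / 4"
proof -
  have pos': "\<forall>v\<in>V. 0 < w' v" using update pos p by simp
  have "(\<Sum>v\<in>V. w' v) = (\<Sum>v\<in>V. p * w v + (1 - 2 * p) * (if P v then w v else 0))"
    using update by (intro sum.cong) (auto simp: algebra_simps)
  also have "\<dots> = p * (\<Sum>v\<in>V. w v) + (1 - 2 * p) * (\<Sum>v\<in>{v\<in>V. P v}. w v)"
    by (simp add: sum.distrib sum_distrib_left sum.inter_filter[OF fin])
  also have "\<dots> \<le> p * (\<Sum>v\<in>V. w v) + (1 - 2 * p) * ((\<Sum>v\<in>V. w v) / 2)"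
    using half p by (intro add_left_mono mult_left_mono) auto
  also have "\<dots> = (\<Sum>v\<in>V. w v) / 2" by (simp add: field_simps)
  finally have "(\<Sum>v\<in>V. w' v) \<le> (\<Sum>v\<in>V. w v) / 2" .
  moreover have "0 \<le> (\<Sum>v\<in>V. w' v)" using pos' by (intro sum_nonneg) (simp add: less_imp_le)
  ultimately have "(\<Sum>v\<in>V. w' v)\<^sup>2 \<le> ((\<Sum>v\<in>V. w v) / 2)\<^sup>2" by (rule power_mono)
  with search_potential_le_square_total[OF fin pos'] no_heavy show ?thesis
    by (simp add: search_potential_def power_divide)
qed

section \<open>The median search process\<close>

lemma median_process_weights_pos:
  assumes "median_process V E p w q a" "0 < p" "p < 1"
  shows "\<forall>v\<in>V. 0 < w t v"
proof (induction t)
  case 0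
  then show ?case using assms(1) by (simp add: median_process_def)
next
  case (Suc t)
  with assms show ?case by (simp add: median_process_def)
qed

lemma compatible_heavy_iff:
  assumes "heavy V w q"
  shows "compatible V E w q a v \<longleftrightarrow> (v = q \<longleftrightarrow> a = None)"
  using assms by (cases a) (auto simp: compatible_def)

lemma compatible_weight_le_half:
  assumes "simple_graph V E" "graph_connected V E" and pos: "\<forall>v\<in>V. 0 < w v"
    and med: "is_median V E w q" and not_heavy: "\<not> heavy V w q"
    and neighbor: "\<forall>u. a = Some u \<longrightarrow> E q u"
  shows "2 * (\<Sum>v\<in>{v\<in>V. compatible V E w q a v}. w v) \<le> (\<Sum>v\<in>V. w v)"
proof (cases a)
  case None
  have fin: "finite V" using assms(1) by (simp add: simple_graph_def)
  have qV: "q \<in> V" using med by (simp add: is_median_def)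
  with None have "{v\<in>V. compatible V E w q a v} = {q}" by (auto simp: compatible_def)
  moreover have "w q < (\<Sum>v\<in>V - {q}. w v)"
    using not_heavy qV heavy_iff_remainder_le[OF fin pos] by auto
  moreover have "(\<Sum>v\<in>V. w v) = w q + (\<Sum>v\<in>V - {q}. w v)"
    using fin qV by (simp add: sum.remove)
  ultimately show ?thesis by simp
next
  case (Some u)
  with not_heavy have "{v\<in>V. compatible V E w q a v} = {v\<in>V. on_shortest_path E q v u}"
    by (simp add: compatible_def)
  with Some neighbor pos show ?thesis
    using median_shortest_path_weight_le_half[OF assms(1,2) med] by (simp add: less_imp_le)
qed

lemma search_potential_step:
  assumes "simple_graph V E" "graph_connected V E" "0 < p" "p < 1/2"
    and process: "median_process V E p w q a"
  shows "search_potential V (w (Suc t)) \<le> search_potential V (w t) / 4"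
proof -
  have fin: "finite V" using assms(1) by (simp add: simple_graph_def)
  have pos: "\<forall>v\<in>V. 0 < w t v"
    using median_process_weights_pos[OF process] assms(3,4) by simp
  have med: "is_median V E (w t) (q t)"
    and query_heavy: "(\<exists>v\<in>V. heavy V (w t) v) \<Longrightarrow> heavy V (w t) (q t)"
    and neighbor: "\<forall>u. a t = Some u \<longrightarrow> E (q t) u"
    and update: "\<forall>v\<in>V. w (Suc t) v =
       (if compatible V E (w t) (q t) (a t) v then 1 - p else p) * w t v"
    using process unfolding median_process_def by blast+
  show ?thesis
  proof (cases "\<exists>z. heavy V (w t) z")
    case True
    then have "heavy V (w t) (q t)" using query_heavy by (auto simp: heavy_def)
    moreover from this have "\<forall>v\<in>V. w (Suc t) v =
       (if v = q t \<longleftrightarrow> a t = None then 1 - p else p) * w t v"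
      using update by (simp add: compatible_heavy_iff)
    ultimately show ?thesis
      using search_potential_heavy_update[OF fin pos _ assms(3,4)] by blast
  next
    case False
    then have "\<not> heavy V (w t) (q t)" by blast
    with compatible_weight_le_half[OF assms(1,2) pos med _ neighbor] False update
    show ?thesis by (intro search_potential_halving_update[OF fin pos _ assms(3,4)])
  qed
qed

lemma search_potential_bound:
  assumes "simple_graph V E" "graph_connected V E" "0 < p" "p < 1/2"
    and "median_process V E p w q a"
  shows "search_potential V (w t) \<le> search_potential V (w 0) / 4 ^ t"
proof (induction t)
  case (Suc t)
  have "search_potential V (w (Suc t)) \<le> search_potential V (w t) / 4"
    by (rule search_potential_step[OF assms])
  also have "\<dots> \<le> search_potential V (w 0) / 4 ^ t / 4"
    using Suc.IH by (simp add: divide_right_mono)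
  also have "\<dots> = search_potential V (w 0) / 4 ^ Suc t"
    by (simp add: divide_divide_eq_left mult.commute)
  finally show ?case .
qed simp

theorem lemma5:
  fixes V :: "'a set" and E :: "'a \<Rightarrow> 'a \<Rightarrow> bool" and p :: real
    and w :: "nat \<Rightarrow> 'a \<Rightarrow> real" and q :: "nat \<Rightarrow> 'a" and a :: "nat \<Rightarrow> 'a option"
  assumes "simple_graph V E" and "graph_connected V E"
    and "0 < p" and "p < 1/2"
    and "median_process V E p w q a"
    and "(\<Sum>v\<in>V. w 0 v) = 1"
  shows "\<forall>\<tau>::nat. \<forall>x. heaviest V (w \<tau>) x \<longrightarrow> (\<Sum>v\<in>V - {x}. w \<tau> v) \<le> 1 / 2 ^ \<tau>"
proof (intro allI impI)
  fix \<tau> :: nat and x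
  assume "heaviest V (w \<tau>) x"
  have fin: "finite V" using assms(1) by (simp add: simple_graph_def)
  have pos: "\<forall>v\<in>V. 0 < w t v" for t
    using median_process_weights_pos[OF assms(5)] assms(3,4) by simp
  have "(\<Sum>v\<in>V - {x}. w \<tau> v)\<^sup>2 \<le> search_potential V (w \<tau>)"
    using remainder_square_le_search_potential[OF fin pos \<open>heaviest V (w \<tau>) x\<close>] .
  also have "\<dots> \<le> search_potential V (w 0) / 4 ^ \<tau>"
    using search_potential_bound[OF assms(1-5)] .
  also have "\<dots> \<le> 1 / 4 ^ \<tau>"
    using search_potential_le_square_total[OF fin pos, of 0] assms(6)
    by (simp add: divide_right_mono)
  also have "\<dots> = (1 / 2 ^ \<tau>)\<^sup>2"
    by (simp add: power2_eq_square flip: power_mult_distrib)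
  finally show "(\<Sum>v\<in>V - {x}. w \<tau> v) \<le> 1 / 2 ^ \<tau>"
    by (rule power2_le_imp_le) simp
qed

end
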